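(* Let $\Omega$ be a bounded, nonempty open set in $\mathbb{R}^d$. If $\Omega$ is spectral, then its boundary $\partial\Omega$ has Lebesgue measure zero.
   Context: $\Omega$ is spectral if there is a countable set $\Lambda\subset\mathbb{R}^d$ such that the exponentials $e^{2\pi i\langle\lambda,x\rangle}$, $\lambda\in\Lambda$, form an orthogonal basis of $L^2(\Omega)$. *)

theory Defs
  imports "HOL-Analysis.Analysis"
begin

definition expo :: "'a::euclidean_space \<Rightarrow> 'a \<Rightarrow> complex" where
  "expo l x = cis (2 * pi * (l \<bullet> x))"

definition square_integrable_on :: "('a::euclidean_space \<Rightarrow> complex) \<Rightarrow> 'a set \<Rightarrow> bool" where
  "square_integrable_on f \<Omega> \<longleftrightarrow>
     f \<in> borel_measurable (lebesgue_on \<Omega>) \<and>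
     integrable (lebesgue_on \<Omega>) (\<lambda>x. (norm (f x))\<^sup>2)"

definition L2_inner :: "'a::euclidean_space set \<Rightarrow> ('a \<Rightarrow> complex) \<Rightarrow> ('a \<Rightarrow> complex) \<Rightarrow> complex" where
  "L2_inner \<Omega> f g = integral\<^sup>L (lebesgue_on \<Omega>) (\<lambda>x. f x * cnj (g x))"

definition orthogonal_basis_exps :: "'a::euclidean_space set \<Rightarrow> 'a set \<Rightarrow> bool" where
  "orthogonal_basis_exps \<Omega> \<Lambda> \<longleftrightarrow>
     (\<forall>l\<in>\<Lambda>. \<forall>m\<in>\<Lambda>. l \<noteq> m \<longrightarrow> L2_inner \<Omega> (expo l) (expo m) = 0) \<and>
     (\<forall>f. square_integrable_on f \<Omega> \<longrightarrow> (\<forall>l\<in>\<Lambda>. L2_inner \<Omega> f (expo l) = 0) \<longrightarrow>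
          (AE x in lebesgue_on \<Omega>. f x = 0))"

definition spectral :: "'a::euclidean_space set \<Rightarrow> bool" where
  "spectral \<Omega> \<longleftrightarrow> (\<exists>\<Lambda>. countable \<Lambda> \<and> orthogonal_basis_exps \<Omega> \<Lambda>)"

end

theory Submission
  imports Defs
begin

text \<open>
  Write \<open>F\<^sub>X\<close> for the Fourier transform of the indicator of \<open>X\<close> and fix \<open>a \<in> \<Lambda>\<close>. The
  coefficients of \<open>indicator X \<cdot> e\<^sub>a\<close> with respect to the exponentials \<open>e\<^sub>\<lambda>\<close>, \<open>\<lambda> \<in> \<Lambda>\<close>, are the
  values \<open>F\<^sub>X(\<lambda> - a)\<close>. Parseval's identity, transported to translates of \<open>\<Omega>\<close>, therefore gives
  \<open>\<Sum>\<^sub>\<lambda> F\<^sub>X(\<lambda> - a) cnj (F\<^sub>Y(\<lambda> - a)) = |\<Omega>| |X \<inter> Y|\<close> whenever \<open>X\<close> and \<open>Y\<close> lie in a common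
  translate \<open>t + \<Omega>\<close>, while orthogonality gives \<open>F\<^sub>\<Omega>(\<lambda> - a) = |\<Omega>|\<close> for \<open>\<lambda> = a\<close> and \<open>0\<close>
  otherwise.

  Let \<open>E = \<partial>\<Omega> \<inter> (t + \<Omega>)\<close> and let \<open>A \<subseteq> \<Omega>\<close> be compact. The boundary is covered by finitely
  many translates \<open>s + \<Omega>\<close> with \<open>s\<close> so small that each of them contains \<open>A\<close>; splitting \<open>E\<close>
  along them shows \<open>\<Sum>\<^sub>\<lambda> F\<^sub>A cnj F\<^sub>E = 0\<close>, hence \<open>\<Sum>\<^sub>\<lambda> F\<^sub>\<Omega>\<^sub>-\<^sub>A cnj F\<^sub>E = |\<Omega>| |E|\<close>. Bounding the
  terms by \<open>|u v| \<le> (|u|\<^sup>2 + |v|\<^sup>2) / 2\<close> and applying Parseval to both squares gives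
  \<open>|E| \<le> |\<Omega> - A|\<close>, which inner regularity makes arbitrarily small. Finitely many translates
  of \<open>\<Omega>\<close> cover \<open>\<partial>\<Omega>\<close>, so \<open>\<partial>\<Omega>\<close> is null.

  Parseval's identity itself comes from completeness by a Riesz-Fischer argument: the
  partial Fourier sums over a rapidly exhausting sequence of finite subsets of \<open>\<Lambda>\<close> converge
  almost everywhere and in \<open>L\<^sup>1\<close>, and the limit has the same coefficients as the function.
\<close>

section \<open>Bounded measurable functions\<close>

lemma borel_measurable_cnj [measurable]:
  "f \<in> borel_measurable M \<Longrightarrow> (\<lambda>x. cnj (f x)) \<in> borel_measurable M"
  by (rule borel_measurable_continuous_on[where f = cnj]) (auto intro: continuous_on_cnj continuous_on_id)

definition bounded_measurable :: "'a measure \<Rightarrow> ('a \<Rightarrow> 'b::real_normed_vector) \<Rightarrow> bool" where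
  "bounded_measurable M f \<longleftrightarrow> f \<in> borel_measurable M \<and> (\<exists>B. \<forall>x\<in>space M. norm (f x) \<le> B)"

lemma bounded_measurableI:
  "f \<in> borel_measurable M \<Longrightarrow> (\<And>x. x \<in> space M \<Longrightarrow> norm (f x) \<le> B) \<Longrightarrow> bounded_measurable M f"
  unfolding bounded_measurable_def by blast

lemma bounded_measurableE:
  assumes "bounded_measurable M f"
  obtains B where "f \<in> borel_measurable M" "B \<ge> 0" "\<And>x. x \<in> space M \<Longrightarrow> norm (f x) \<le> B"
proof -
  obtain B where "f \<in> borel_measurable M" "\<forall>x\<in>space M. norm (f x) \<le> B"
    using assms unfolding bounded_measurable_def by blast
  then show ?thesis
    using that[of "max B 0"] by (meson max.cobounded2 max.coboundedI1)
qed

lemma bounded_measurable_borel_measurable [measurable_dest]: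
  "bounded_measurable M f \<Longrightarrow> f \<in> borel_measurable M"
  unfolding bounded_measurable_def by blast

lemma bounded_measurable_const: "bounded_measurable M (\<lambda>x. c)"
  by (rule bounded_measurableI[where B = "norm c"]) auto

lemma bounded_measurable_add:
  fixes f g :: "'a \<Rightarrow> 'b::{real_normed_vector, second_countable_topology}"
  assumes "bounded_measurable M f" "bounded_measurable M g"
  shows "bounded_measurable M (\<lambda>x. f x + g x)"
proof -
  obtain A B where "\<And>x. x \<in> space M \<Longrightarrow> norm (f x) \<le> A" "\<And>x. x \<in> space M \<Longrightarrow> norm (g x) \<le> B"
    using assms by (metis bounded_measurableE)
  then show ?thesis
    using assms by (intro bounded_measurableI[where B = "A + B"]) (auto intro: norm_triangle_le add_mono)
qed

lemma bounded_measurable_mult: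
  fixes f g :: "'a \<Rightarrow> 'b::{real_normed_algebra, second_countable_topology}"
  assumes "bounded_measurable M f" "bounded_measurable M g"
  shows "bounded_measurable M (\<lambda>x. f x * g x)"
proof -
  obtain A B where "A \<ge> 0" "B \<ge> 0" "\<And>x. x \<in> space M \<Longrightarrow> norm (f x) \<le> A"
    "\<And>x. x \<in> space M \<Longrightarrow> norm (g x) \<le> B"
    using assms by (metis bounded_measurableE)
  then have "norm (f x * g x) \<le> A * B" if "x \<in> space M" for x
    using that by (meson mult_mono norm_ge_zero norm_mult_ineq order_trans)
  then show ?thesis
    using assms by (intro bounded_measurableI[where B = "A * B"]) auto
qed

lemma bounded_measurable_cmult:
  fixes f :: "'a \<Rightarrow> 'b::{real_normed_algebra_1, second_countable_topology}"
  shows "bounded_measurable M f \<Longrightarrow> bounded_measurable M (\<lambda>x. c * f x)"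
  by (rule bounded_measurable_mult[OF bounded_measurable_const])

lemma bounded_measurable_diff:
  fixes f g :: "'a \<Rightarrow> 'b::{real_normed_algebra_1, second_countable_topology}"
  assumes "bounded_measurable M f" "bounded_measurable M g"
  shows "bounded_measurable M (\<lambda>x. f x - g x)"
  using bounded_measurable_add[OF assms(1) bounded_measurable_cmult[OF assms(2), of "-1"]] by simp

lemma bounded_measurable_sum:
  fixes u :: "'i \<Rightarrow> 'a \<Rightarrow> 'b::{real_normed_vector, second_countable_topology}"
  shows "(\<And>i. i \<in> I \<Longrightarrow> bounded_measurable M (u i)) \<Longrightarrow> bounded_measurable M (\<lambda>x. \<Sum>i\<in>I. u i x)"
proof (induction I rule: infinite_finite_induct)
  case (insert i I)
  then show ?case using bounded_measurable_add[of M "u i"] by simp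
qed (auto intro: bounded_measurable_const)

lemma bounded_measurable_cnj:
  "bounded_measurable M f \<Longrightarrow> bounded_measurable M (\<lambda>x. cnj (f x))"
  by (auto simp: bounded_measurable_def)

lemma (in finite_measure) integrable_bounded_measurable:
  fixes f :: "'a \<Rightarrow> 'b::{banach, second_countable_topology}"
  assumes "bounded_measurable M f"
  shows "integrable M f"
proof -
  obtain B where "f \<in> borel_measurable M" "\<And>x. x \<in> space M \<Longrightarrow> norm (f x) \<le> B"
    using assms by (metis bounded_measurableE)
  then show ?thesis
    by (intro integrable_const_bound[where B = B]) (auto intro: AE_I2)
qed

lemma (in finite_measure) square_integrable_bounded_measurable:
  fixes f :: "'a \<Rightarrow> 'b::{real_normed_vector, second_countable_topology}"
  assumes "bounded_measurable M f"
  shows "integrable M (\<lambda>x. (norm (f x))\<^sup>2)"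
proof -
  obtain B where "f \<in> borel_measurable M" "B \<ge> 0" "\<And>x. x \<in> space M \<Longrightarrow> norm (f x) \<le> B"
    using assms by (metis bounded_measurableE)
  then show ?thesis
    by (intro integrable_const_bound[where B = "B\<^sup>2"]) (auto intro!: AE_I2 power_mono)
qed

lemma (in finite_measure) integral_norm_le_AM_GM:
  fixes f :: "'a \<Rightarrow> real"
  assumes f: "f \<in> borel_measurable M" "integrable M (\<lambda>x. (f x)\<^sup>2)" and c: "c > 0"
  shows "(\<integral>x. \<bar>f x\<bar> \<partial>M) \<le> (c * (\<integral>x. (f x)\<^sup>2 \<partial>M) + measure M (space M) / c) / 2"
proof -
  have pointwise: "\<bar>f x\<bar> \<le> (c * (f x)\<^sup>2 + 1 / c) / 2" for x
  proof -
    have "0 \<le> (c * \<bar>f x\<bar> - 1)\<^sup>2" by simp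
    then show ?thesis using c by (simp add: field_simps power2_eq_square)
  qed
  have "integrable M f"
    using f by (rule square_integrable_imp_integrable)
  then have "(\<integral>x. \<bar>f x\<bar> \<partial>M) \<le> (\<integral>x. (c * (f x)\<^sup>2 + 1 / c) / 2 \<partial>M)"
    using f(2) pointwise by (intro integral_mono) auto
  also have "\<dots> = (c * (\<integral>x. (f x)\<^sup>2 \<partial>M) + measure M (space M) / c) / 2"
    using f by simp
  finally show ?thesis .
qed

lemma (in finite_measure) integral_norm_le_geometric_of_square_le:
  fixes f :: "'a \<Rightarrow> 'b::{real_normed_vector, second_countable_topology}"
  assumes f: "bounded_measurable M f" and square: "(\<integral>x. (norm (f x))\<^sup>2 \<partial>M) \<le> (1/4)^k"
  shows "(\<integral>x. norm (f x) \<partial>M) \<le> (1 + measure M (space M)) / 2 * (1/2)^k"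
proof -
  have "(\<integral>x. norm (f x) \<partial>M) \<le> (2^k * (\<integral>x. (norm (f x))\<^sup>2 \<partial>M) + measure M (space M) / 2^k) / 2"
    using integral_norm_le_AM_GM[of "\<lambda>x. norm (f x)" "2^k"] square_integrable_bounded_measurable[OF f] f
    by simp
  also have "\<dots> \<le> (2^k * (1/4)^k + measure M (space M) / 2^k) / 2"
    using square by (intro divide_right_mono add_right_mono mult_left_mono) auto
  also have "\<dots> = (1 + measure M (space M)) / 2 * (1/2)^k"
    by (simp add: field_simps power_mult_distrib[symmetric])
  finally show ?thesis .
qed

lemma integrable_mult_bounded_measurable:
  fixes f u :: "'a \<Rightarrow> 'b::{real_normed_field, second_countable_topology, banach}"
  assumes f: "integrable M f" and u: "bounded_measurable M u"
  shows "integrable M (\<lambda>x. f x * u x)"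
proof -
  obtain B where [measurable]: "u \<in> borel_measurable M" and "B \<ge> 0"
    and B: "\<And>x. x \<in> space M \<Longrightarrow> norm (u x) \<le> B"
    using u by (metis bounded_measurableE)
  show ?thesis
  proof (rule Bochner_Integration.integrable_bound)
    show "integrable M (\<lambda>x. B * norm (f x))"
      using f by (intro integrable_mult_right integrable_norm)
    show "AE x in M. norm (f x * u x) \<le> norm (B * norm (f x))"
    proof (rule AE_I2)
      fix x assume "x \<in> space M"
      then have "norm (f x) * norm (u x) \<le> norm (f x) * B"
        using B by (intro mult_left_mono) auto
      then show "norm (f x * u x) \<le> norm (B * norm (f x))"
        using \<open>B \<ge> 0\<close> by (simp add: norm_mult mult.commute)
    qed
  qed (use f in measurable)
qed

lemma tendsto_integral_mult_bounded_measurable: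
  fixes R :: "nat \<Rightarrow> 'a \<Rightarrow> 'b::{real_normed_field, second_countable_topology, banach}"
  assumes R: "\<And>k. integrable M (R k)" "(\<lambda>k. \<integral>x. norm (R k x) \<partial>M) \<longlonglongrightarrow> 0"
    and u: "bounded_measurable M u"
  shows "(\<lambda>k. \<integral>x. R k x * u x \<partial>M) \<longlonglongrightarrow> 0"
proof -
  obtain B where [measurable]: "u \<in> borel_measurable M" and "B \<ge> 0"
    and B: "\<And>x. x \<in> space M \<Longrightarrow> norm (u x) \<le> B"
    using u by (metis bounded_measurableE)
  have bound: "norm (\<integral>x. R k x * u x \<partial>M) \<le> B * (\<integral>x. norm (R k x) \<partial>M)" for k
  proof -
    have "norm (\<integral>x. R k x * u x \<partial>M) \<le> (\<integral>x. norm (R k x * u x) \<partial>M)"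
      by (rule integral_norm_bound)
    also have "\<dots> \<le> (\<integral>x. B * norm (R k x) \<partial>M)"
    proof (rule Bochner_Integration.integral_mono)
      show "integrable M (\<lambda>x. norm (R k x * u x))"
        using integrable_mult_bounded_measurable[OF R(1) u] by (rule integrable_norm)
      show "integrable M (\<lambda>x. B * norm (R k x))"
        using R(1) by (intro integrable_mult_right integrable_norm)
      fix x assume "x \<in> space M"
      then have "norm (u x) * norm (R k x) \<le> B * norm (R k x)"
        using B by (intro mult_right_mono) auto
      then show "norm (R k x * u x) \<le> B * norm (R k x)"
        by (metis mult.commute norm_mult)
    qed
    finally show ?thesis by simp
  qed
  have "(\<lambda>k. B * (\<integral>x. norm (R k x) \<partial>M)) \<longlonglongrightarrow> 0"
    using tendsto_mult_right_zero[OF R(2)] .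
  with always_eventually[OF allI[OF bound]] show ?thesis
    by (rule Lim_null_comparison)
qed

section \<open>Sums over countable sets\<close>

lemma filterlim_finite_subsets_at_topI:
  assumes "\<And>k. finite (F k)" "\<And>k. F k \<subseteq> A" "\<And>x. x \<in> A \<Longrightarrow> eventually (\<lambda>k. x \<in> F k) sequentially"
  shows "filterlim F (finite_subsets_at_top A) sequentially"
  unfolding filterlim_finite_subsets_at_top
proof (intro allI impI)
  fix X assume X: "finite X \<and> X \<subseteq> A"
  then have "eventually (\<lambda>k. \<forall>x\<in>X. x \<in> F k) sequentially"
    using assms(3) by (intro eventually_ball_finite) auto
  then show "eventually (\<lambda>k. finite (F k) \<and> X \<subseteq> F k \<and> F k \<subseteq> A) sequentially"
    by (rule eventually_mono) (use assms(1,2) in blast)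
qed

lemma finite_subsets_exhausting_with_small_tails:
  fixes p :: "'i \<Rightarrow> real" and \<epsilon> :: "nat \<Rightarrow> real"
  assumes L: "countable L" and P: "(p has_sum P) L" and \<epsilon>: "\<And>k. \<epsilon> k > 0"
  obtains F where "\<And>k. finite (F k)" "\<And>k. F k \<subseteq> L" "\<And>k. F k \<subseteq> F (Suc k)"
    "filterlim F (finite_subsets_at_top L) sequentially" "\<And>k. \<bar>P - sum p (F k)\<bar> < \<epsilon> k"
proof -
  have "\<exists>W. finite W \<and> W \<subseteq> L \<and> (\<forall>Y. finite Y \<and> W \<subseteq> Y \<and> Y \<subseteq> L \<longrightarrow> \<bar>P - sum p Y\<bar> < \<epsilon> k)" for k
  proof -
    have "eventually (\<lambda>Y. dist (sum p Y) P < \<epsilon> k) (finite_subsets_at_top L)"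
      using P \<epsilon> unfolding has_sum_def tendsto_iff by blast
    then show ?thesis
      unfolding eventually_finite_subsets_at_top dist_real_def by (metis abs_minus_commute)
  qed
  then obtain W where W: "\<And>k. finite (W k)" "\<And>k. W k \<subseteq> L"
    "\<And>k Y. finite Y \<Longrightarrow> W k \<subseteq> Y \<Longrightarrow> Y \<subseteq> L \<Longrightarrow> \<bar>P - sum p Y\<bar> < \<epsilon> k"
    by metis
  \<comment> \<open>The enumeration of \<open>L\<close> is added so that every element of \<open>L\<close> is eventually caught.\<close>
  define F where "F k = (\<Union>j\<le>k. W j) \<union> (L \<inter> from_nat_into L ` {..k})" for k
  have F_finite: "finite (F k)" and F_sub: "F k \<subseteq> L" for k
    unfolding F_def using W(1,2) by auto
  have "eventually (\<lambda>k. x \<in> F k) sequentially" if "x \<in> L" for x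
    using eventually_ge_at_top[of "to_nat_on L x"]
    by eventually_elim (use that from_nat_into_to_nat_on[OF L that] in \<open>force simp: F_def\<close>)
  then have "filterlim F (finite_subsets_at_top L) sequentially"
    by (intro filterlim_finite_subsets_at_topI F_finite F_sub)
  moreover have "\<bar>P - sum p (F k)\<bar> < \<epsilon> k" for k
    using W(3)[OF F_finite _ F_sub] unfolding F_def by blast
  moreover have "F k \<subseteq> F (Suc k)" for k
    unfolding F_def by auto
  ultimately show ?thesis
    using that F_finite F_sub by blast
qed

lemma has_sum_norm_le_AM_GM:
  fixes x y :: "'i \<Rightarrow> complex"
  assumes "((\<lambda>l. x l * cnj (y l)) has_sum c) L"
    and "((\<lambda>l. (norm (x l))\<^sup>2) has_sum p) L" "((\<lambda>l. (norm (y l))\<^sup>2) has_sum q) L"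
  shows "norm c \<le> (p + q) / 2"
proof -
  have half: "((\<lambda>l. ((norm (x l))\<^sup>2 + (norm (y l))\<^sup>2) / 2) has_sum ((p + q) / 2)) L"
    using has_sum_cmult_right[OF has_sum_add[OF assms(2,3)], of "1/2"] by simp
  have pointwise: "norm (x l * cnj (y l)) \<le> ((norm (x l))\<^sup>2 + (norm (y l))\<^sup>2) / 2" for l
  proof -
    have "0 \<le> (norm (x l) - norm (y l))\<^sup>2"
      by simp
    then show ?thesis
      by (simp add: norm_mult power2_eq_square algebra_simps)
  qed
  have summable: "(\<lambda>l. norm (x l * cnj (y l))) summable_on L"
    using Infinite_Sum.abs_summable_on_comparison_test'[OF has_sum_imp_summable[OF half] pointwise] .
  have "norm c = norm (infsum (\<lambda>l. x l * cnj (y l)) L)"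
    using assms(1) by (simp add: infsumI)
  also have "\<dots> \<le> infsum (\<lambda>l. norm (x l * cnj (y l))) L"
    by (rule norm_infsum_bound[OF summable])
  also have "\<dots> \<le> (p + q) / 2"
    using infsum_mono[OF summable has_sum_imp_summable[OF half] pointwise] half by (simp add: infsumI)
  finally show ?thesis .
qed

section \<open>Rapidly converging sequences in \<open>L\<^sup>1\<close>\<close>

lemma nn_integral_norm_tail_le_geometric:
  fixes D :: "nat \<Rightarrow> 'a \<Rightarrow> 'b::{banach, second_countable_topology}"
  assumes D: "\<And>k. integrable M (D k)" "\<And>k. (\<integral>x. norm (D k x) \<partial>M) \<le> C * (1/2)^k"
    and C: "C \<ge> 0"
  shows "(\<integral>\<^sup>+x. (\<Sum>j. ennreal (norm (D (j + n) x))) \<partial>M) \<le> ennreal (2 * C * (1/2)^n)"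
proof -
  have "(\<integral>\<^sup>+x. (\<Sum>j. ennreal (norm (D (j + n) x))) \<partial>M) = (\<Sum>j. \<integral>\<^sup>+x. ennreal (norm (D (j + n) x)) \<partial>M)"
    using D(1) by (intro nn_integral_suminf) auto
  also have "\<dots> = (\<Sum>j. ennreal (\<integral>x. norm (D (j + n) x) \<partial>M))"
    using D(1) by (subst nn_integral_eq_integral) auto
  also have "\<dots> \<le> (\<Sum>j. ennreal (C * (1/2)^(j + n)))"
    using D(2) by (intro suminf_le summableI ennreal_leI)
  also have "\<dots> = ennreal (2 * C * (1/2)^n)"
  proof (rule suminf_ennreal_eq)
    have "(\<lambda>j. (C * (1/2)^n) * (1/2::real)^j) sums ((C * (1/2)^n) * (1 / (1 - 1/2)))"
      by (intro sums_mult geometric_sums) simp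
    then show "(\<lambda>j. C * (1/2::real)^(j + n)) sums (2 * C * (1/2)^n)"
      by (simp add: power_add mult_ac)
  qed (use C in simp)
  finally show ?thesis .
qed

lemma AE_summable_norm_of_geometric_L1_bound:
  fixes D :: "nat \<Rightarrow> 'a \<Rightarrow> 'b::{banach, second_countable_topology}"
  assumes "\<And>k. integrable M (D k)" "\<And>k. (\<integral>x. norm (D k x) \<partial>M) \<le> C * (1/2)^k" "C \<ge> 0"
  shows "AE x in M. summable (\<lambda>k. norm (D k x))"
proof -
  have "AE x in M. (\<Sum>j. ennreal (norm (D j x))) \<noteq> \<infinity>"
    using nn_integral_norm_tail_le_geometric[OF assms, of 0] assms(1)
    by (intro nn_integral_noteq_infinite) (auto simp: top_unique)
  then show ?thesis
    by eventually_elim (rule summable_suminf_not_top, auto simp: infinity_ennreal_def)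
qed

lemma integral_norm_le_of_nn_integral_le:
  fixes f :: "'a \<Rightarrow> 'b::{banach, second_countable_topology}"
  assumes "integrable M f" "(\<integral>\<^sup>+x. ennreal (norm (f x)) \<partial>M) \<le> ennreal c" "c \<ge> 0"
  shows "(\<integral>x. norm (f x) \<partial>M) \<le> c"
  using assms by (subst ennreal_le_iff[symmetric]) (auto simp: nn_integral_eq_integral[symmetric])

lemma telescoping_series_limit:
  fixes s :: "nat \<Rightarrow> 'b::banach"
  assumes summable: "summable (\<lambda>k. norm (s (Suc k) - s k))"
  defines "t \<equiv> s 0 + (\<Sum>k. s (Suc k) - s k)"
  shows "s \<longlonglongrightarrow> t" and "norm (t - s n) \<le> (\<Sum>j. norm (s (Suc (j + n)) - s (j + n)))"
proof -
  have partial: "s k = s 0 + (\<Sum>j<k. s (Suc j) - s j)" for k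
    using sum_lessThan_telescope[of s k] by simp
  have "(\<lambda>k. \<Sum>j<k. s (Suc j) - s j) \<longlonglongrightarrow> (\<Sum>k. s (Suc k) - s k)"
    using summable by (intro summable_LIMSEQ) (rule summable_norm_cancel)
  then have "(\<lambda>k. s 0 + (\<Sum>j<k. s (Suc j) - s j)) \<longlonglongrightarrow> t"
    unfolding t_def by (rule tendsto_add[OF tendsto_const])
  then show "s \<longlonglongrightarrow> t"
    unfolding partial[symmetric] .
  have shifted: "summable (\<lambda>j. norm (s (Suc (j + n)) - s (j + n)))"
    using summable summable_iff_shift[of "\<lambda>m. norm (s (Suc m) - s m)" n] by simp
  have "t - s n = (\<Sum>j. s (Suc (j + n)) - s (j + n))"
    unfolding t_def partial[of n] using suminf_split_initial_segment[OF summable_norm_cancel[OF summable], of n]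
    by simp
  then show "norm (t - s n) \<le> (\<Sum>j. norm (s (Suc (j + n)) - s (j + n)))"
    using summable_norm[OF shifted] by simp
qed

lemma L1_fast_Cauchy_sequence_converges:
  fixes S :: "nat \<Rightarrow> 'a \<Rightarrow> 'b::{banach, second_countable_topology}"
  assumes S: "\<And>k. integrable M (S k)"
    and steps: "\<And>k. (\<integral>x. norm (S (Suc k) x - S k x) \<partial>M) \<le> C * (1/2)^k"
  obtains g where "g \<in> borel_measurable M" "AE x in M. (\<lambda>k. S k x) \<longlonglongrightarrow> g x"
    "\<And>k. integrable M (\<lambda>x. g x - S k x)" "(\<lambda>k. \<integral>x. norm (g x - S k x) \<partial>M) \<longlonglongrightarrow> 0"
proof -
  define D where "D k x = S (Suc k) x - S k x" for k x
  have D_int: "integrable M (D k)" for k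
    unfolding D_def by (intro Bochner_Integration.integrable_diff S)
  have [measurable]: "S k \<in> borel_measurable M" for k
    using S by (rule borel_measurable_integrable)
  have "0 \<le> (\<integral>x. norm (D 0 x) \<partial>M)"
    by (rule integral_nonneg_AE) simp
  also have "\<dots> \<le> C"
    using steps[of 0] by (simp add: D_def)
  finally have C: "C \<ge> 0" .
  note D_steps = steps[folded D_def]
  note summable = AE_summable_norm_of_geometric_L1_bound[OF D_int D_steps C, unfolded D_def]
  define g where "g x = S 0 x + (\<Sum>k. S (Suc k) x - S k x)" for x
  have g_meas: "g \<in> borel_measurable M"
    unfolding g_def by measurable
  have lim: "AE x in M. (\<lambda>k. S k x) \<longlonglongrightarrow> g x"
    using summable by eventually_elim (unfold g_def, rule telescoping_series_limit(1))
  have "AE x in M. ennreal (norm (g x - S n x)) \<le> (\<Sum>j. ennreal (norm (D (j + n) x)))" for n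
    using summable
  proof eventually_elim
    case (elim x)
    have "summable (\<lambda>j. norm (D (j + n) x))"
      using elim summable_iff_shift[of "\<lambda>m. norm (D m x)" n] by (simp add: D_def)
    then show ?case
      using telescoping_series_limit(2)[OF elim, of n] unfolding g_def D_def
      by (simp add: ennreal_leI suminf_ennreal2)
  qed
  from nn_integral_mono_AE[OF this] have nn_bound:
    "(\<integral>\<^sup>+x. ennreal (norm (g x - S n x)) \<partial>M) \<le> ennreal (2 * C * (1/2)^n)" for n
    using nn_integral_norm_tail_le_geometric[OF D_int D_steps C] by (rule order_trans)
  have integrable: "integrable M (\<lambda>x. g x - S n x)" for n
    using nn_bound[of n] g_meas by (auto simp: integrable_iff_bounded le_less_trans[OF _ ennreal_less_top])
  have "(\<lambda>k. \<integral>x. norm (g x - S k x) \<partial>M) \<longlonglongrightarrow> 0"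
  proof (rule Lim_null_comparison[OF always_eventually])
    show "\<forall>k. norm (\<integral>x. norm (g x - S k x) \<partial>M) \<le> 2 * C * (1/2)^k"
      using integral_norm_le_of_nn_integral_le[OF integrable nn_bound] C by simp
    show "(\<lambda>k. 2 * C * (1/2::real)^k) \<longlonglongrightarrow> 0"
      by (intro tendsto_mult_right_zero LIMSEQ_power_zero) simp
  qed
  then show ?thesis
    using that g_meas lim integrable by blast
qed

lemma square_integrable_limit_Fatou:
  fixes f g :: "'a \<Rightarrow> 'b::{banach, second_countable_topology}"
  assumes [measurable]: "f \<in> borel_measurable M" "g \<in> borel_measurable M" "\<And>k. S k \<in> borel_measurable M"
    and lim: "AE x in M. (\<lambda>k. S k x) \<longlonglongrightarrow> g x"
    and bound: "\<And>k. (\<integral>\<^sup>+x. ennreal ((norm (f x - S k x))\<^sup>2) \<partial>M) \<le> ennreal B"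
  shows "integrable M (\<lambda>x. (norm (f x - g x))\<^sup>2)"
proof -
  have "(\<integral>\<^sup>+x. ennreal ((norm (f x - g x))\<^sup>2) \<partial>M) = (\<integral>\<^sup>+x. liminf (\<lambda>k. ennreal ((norm (f x - S k x))\<^sup>2)) \<partial>M)"
  proof (rule nn_integral_cong_AE)
    show "AE x in M. ennreal ((norm (f x - g x))\<^sup>2) = liminf (\<lambda>k. ennreal ((norm (f x - S k x))\<^sup>2))"
      using lim
    proof eventually_elim
      case (elim x)
      then have "(\<lambda>k. ennreal ((norm (f x - S k x))\<^sup>2)) \<longlonglongrightarrow> ennreal ((norm (f x - g x))\<^sup>2)"
        by (intro tendsto_ennrealI tendsto_power tendsto_norm tendsto_diff tendsto_const)
      then show ?case
        by (rule lim_imp_Liminf[OF trivial_limit_sequentially, symmetric])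
    qed
  qed
  also have "\<dots> \<le> liminf (\<lambda>k. \<integral>\<^sup>+x. ennreal ((norm (f x - S k x))\<^sup>2) \<partial>M)"
    by (rule nn_integral_liminf) measurable
  also have "\<dots> \<le> limsup (\<lambda>k. \<integral>\<^sup>+x. ennreal ((norm (f x - S k x))\<^sup>2) \<partial>M)"
    by (rule Liminf_le_Limsup) simp
  also have "\<dots> \<le> ennreal B"
    using bound by (intro Limsup_bounded always_eventually allI)
  finally show ?thesis
    unfolding integrable_iff_bounded by (auto simp: le_less_trans[OF _ ennreal_less_top])
qed

section \<open>Parseval's identity for a complete orthogonal system\<close>

locale unimodular_orthogonal_basis = finite_measure M for M :: "'a measure" +
  fixes L :: "'i set" and e :: "'i \<Rightarrow> 'a \<Rightarrow> complex"
  assumes countable_L: "countable L"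
    and e_measurable [measurable]: "\<And>l. e l \<in> borel_measurable M"
    and norm_e: "\<And>l x. x \<in> space M \<Longrightarrow> norm (e l x) = 1"
    and e_orthogonal: "\<And>l k. l \<in> L \<Longrightarrow> k \<in> L \<Longrightarrow> l \<noteq> k \<Longrightarrow> (\<integral>x. e l x * cnj (e k x) \<partial>M) = 0"
    and e_complete: "\<And>f. f \<in> borel_measurable M \<Longrightarrow> integrable M (\<lambda>x. (norm (f x))\<^sup>2) \<Longrightarrow>
      (\<forall>l\<in>L. (\<integral>x. f x * cnj (e l x) \<partial>M) = 0) \<Longrightarrow> AE x in M. f x = 0"
    and volume_pos: "measure M (space M) > 0"
begin

abbreviation vol :: real where
  "vol \<equiv> measure M (space M)"

text \<open>Inner products are only formed between bounded measurable functions, for which all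
  products are integrable; products of indicators and exponentials are all that is needed.\<close>

definition inner_L2 :: "('a \<Rightarrow> complex) \<Rightarrow> ('a \<Rightarrow> complex) \<Rightarrow> complex" where
  "inner_L2 f g = (\<integral>x. f x * cnj (g x) \<partial>M)"

definition fourier_partial_sum :: "('a \<Rightarrow> complex) \<Rightarrow> 'i set \<Rightarrow> 'a \<Rightarrow> complex" where
  "fourier_partial_sum f F x = (\<Sum>l\<in>F. (inner_L2 f (e l) / vol) * e l x)"

lemma bounded_measurable_e: "bounded_measurable M (e l)"
  by (rule bounded_measurableI[where B = 1]) (simp_all add: norm_e)

lemma bounded_measurable_combination: "bounded_measurable M (\<lambda>x. \<Sum>l\<in>F. c l * e l x)"
  by (intro bounded_measurable_sum bounded_measurable_cmult bounded_measurable_e)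

lemma bounded_measurable_fourier_partial_sum: "bounded_measurable M (fourier_partial_sum f F)"
  unfolding fourier_partial_sum_def[abs_def] by (rule bounded_measurable_combination)

lemma integrable_inner_L2:
  "bounded_measurable M f \<Longrightarrow> bounded_measurable M g \<Longrightarrow> integrable M (\<lambda>x. f x * cnj (g x))"
  by (intro integrable_bounded_measurable bounded_measurable_mult bounded_measurable_cnj)

lemma inner_L2_commute: "inner_L2 g f = cnj (inner_L2 f g)"
proof -
  have "cnj (inner_L2 f g) = (\<integral>x. cnj (f x * cnj (g x)) \<partial>M)"
    unfolding inner_L2_def by (rule Bochner_Integration.integral_cnj[symmetric])
  then show ?thesis
    by (simp add: inner_L2_def mult.commute)
qed

lemma inner_L2_diff_left:
  assumes "bounded_measurable M f" "bounded_measurable M g" "bounded_measurable M h"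
  shows "inner_L2 (\<lambda>x. f x - g x) h = inner_L2 f h - inner_L2 g h"
  unfolding inner_L2_def left_diff_distrib using assms by (intro Bochner_Integration.integral_diff integrable_inner_L2)

lemma inner_L2_add_left:
  assumes "bounded_measurable M f" "bounded_measurable M g" "bounded_measurable M h"
  shows "inner_L2 (\<lambda>x. f x + g x) h = inner_L2 f h + inner_L2 g h"
  unfolding inner_L2_def distrib_right using assms by (intro Bochner_Integration.integral_add integrable_inner_L2)

lemma inner_L2_add_right:
  assumes "bounded_measurable M f" "bounded_measurable M g" "bounded_measurable M h"
  shows "inner_L2 h (\<lambda>x. f x + g x) = inner_L2 h f + inner_L2 h g"
  using inner_L2_add_left[OF assms] by (metis complex_cnj_add inner_L2_commute)

lemma inner_L2_self:
  "inner_L2 f f = of_real (\<integral>x. (norm (f x))\<^sup>2 \<partial>M)"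
  unfolding inner_L2_def by (simp add: complex_norm_square[symmetric] integral_complex_of_real[symmetric])

lemma inner_L2_combination_left:
  assumes "bounded_measurable M h"
  shows "inner_L2 (\<lambda>x. \<Sum>l\<in>F. c l * e l x) h = (\<Sum>l\<in>F. c l * inner_L2 (e l) h)"
proof -
  have "inner_L2 (\<lambda>x. \<Sum>l\<in>F. c l * e l x) h = (\<Sum>l\<in>F. \<integral>x. c l * (e l x * cnj (h x)) \<partial>M)"
    unfolding inner_L2_def sum_distrib_right mult.assoc
    using assms by (intro Bochner_Integration.integral_sum integrable_mult_right integrable_inner_L2 bounded_measurable_e)
  then show ?thesis
    unfolding inner_L2_def by simp
qed

lemma inner_L2_combination_right:
  assumes "bounded_measurable M h"
  shows "inner_L2 h (\<lambda>x. \<Sum>l\<in>F. c l * e l x) = (\<Sum>l\<in>F. cnj (c l) * inner_L2 h (e l))"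
  by (subst inner_L2_commute) (simp add: inner_L2_combination_left[OF assms] inner_L2_commute[of "e _" h])

lemma inner_L2_e_e:
  assumes "l \<in> L" "k \<in> L"
  shows "inner_L2 (e l) (e k) = (if l = k then vol else 0)"
proof (cases "l = k")
  case True
  have "(\<integral>x. (norm (e l x))\<^sup>2 \<partial>M) = (\<integral>x. 1 \<partial>M)"
    by (rule Bochner_Integration.integral_cong) (simp_all add: norm_e)
  then show ?thesis
    using True by (simp add: inner_L2_self)
qed (use assms e_orthogonal in \<open>auto simp: inner_L2_def\<close>)

lemma inner_L2_combination_e:
  assumes "finite F" "F \<subseteq> L" "l \<in> L"
  shows "inner_L2 (\<lambda>x. \<Sum>k\<in>F. c k * e k x) (e l) = (if l \<in> F then c l * vol else 0)"
proof -
  have "inner_L2 (\<lambda>x. \<Sum>k\<in>F. c k * e k x) (e l) = (\<Sum>k\<in>F. if k = l then c l * vol else 0)"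
    unfolding inner_L2_combination_left[OF bounded_measurable_e]
    using assms by (intro sum.cong) (auto simp: inner_L2_e_e subsetD)
  then show ?thesis
    using assms(1) by simp
qed

lemma integral_norm_combination_squared:
  assumes "finite F" "F \<subseteq> L"
  shows "(\<integral>x. (norm (\<Sum>l\<in>F. c l * e l x))\<^sup>2 \<partial>M) = vol * (\<Sum>l\<in>F. (norm (c l))\<^sup>2)"
proof -
  have "of_real (\<integral>x. (norm (\<Sum>l\<in>F. c l * e l x))\<^sup>2 \<partial>M)
      = (\<Sum>l\<in>F. cnj (c l) * inner_L2 (\<lambda>x. \<Sum>k\<in>F. c k * e k x) (e l))"
    unfolding inner_L2_self[symmetric] by (rule inner_L2_combination_right[OF bounded_measurable_combination])
  also have "\<dots> = (\<Sum>l\<in>F. of_real (vol * (norm (c l))\<^sup>2))"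
  proof (rule sum.cong)
    fix l assume "l \<in> F"
    then have "inner_L2 (\<lambda>x. \<Sum>k\<in>F. c k * e k x) (e l) = c l * vol"
      using assms by (simp add: inner_L2_combination_e subsetD)
    then show "cnj (c l) * inner_L2 (\<lambda>x. \<Sum>k\<in>F. c k * e k x) (e l) = of_real (vol * (norm (c l))\<^sup>2)"
      by (simp only: of_real_mult complex_norm_square) (simp add: ac_simps)
  qed simp
  finally show ?thesis
    by (simp only: of_real_sum[symmetric] of_real_eq_iff sum_distrib_left)
qed

lemma inner_L2_fourier_partial_sum_right:
  assumes "bounded_measurable M h"
  shows "inner_L2 h (fourier_partial_sum f F) = (\<Sum>l\<in>F. cnj (inner_L2 f (e l) / vol) * inner_L2 h (e l))"
  unfolding fourier_partial_sum_def[abs_def] by (rule inner_L2_combination_right[OF assms])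

lemma inner_L2_fourier_partial_sum_e:
  assumes "finite F" "F \<subseteq> L" "l \<in> L"
  shows "inner_L2 (fourier_partial_sum f F) (e l) = (if l \<in> F then inner_L2 f (e l) else 0)"
  unfolding fourier_partial_sum_def[abs_def] inner_L2_combination_e[OF assms] using volume_pos by simp

lemma inner_L2_residual_e:
  assumes f: "bounded_measurable M f" and F: "finite F" "F \<subseteq> L" and l: "l \<in> F"
  shows "inner_L2 (\<lambda>x. f x - fourier_partial_sum f F x) (e l) = 0"
  using assms by (simp add: inner_L2_diff_left bounded_measurable_fourier_partial_sum bounded_measurable_e
      inner_L2_fourier_partial_sum_e subsetD)

lemma integral_norm_fourier_partial_sum_squared:
  assumes "finite F" "F \<subseteq> L"
  shows "(\<integral>x. (norm (fourier_partial_sum f F x))\<^sup>2 \<partial>M) = (\<Sum>l\<in>F. (norm (inner_L2 f (e l)))\<^sup>2) / vol"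
  unfolding fourier_partial_sum_def integral_norm_combination_squared[OF assms]
  using volume_pos by (simp add: sum_divide_distrib sum_distrib_left norm_divide power_divide power2_eq_square)

lemma pythagoras:
  assumes u: "bounded_measurable M u" and v: "bounded_measurable M v" and orth: "inner_L2 u v = 0"
  shows "(\<integral>x. (norm (u x + v x))\<^sup>2 \<partial>M) = (\<integral>x. (norm (u x))\<^sup>2 \<partial>M) + (\<integral>x. (norm (v x))\<^sup>2 \<partial>M)"
proof -
  have uv: "bounded_measurable M (\<lambda>x. u x + v x)"
    using u v by (rule bounded_measurable_add)
  have "inner_L2 v u = 0"
    using orth by (simp add: inner_L2_commute[of v])
  then have "inner_L2 (\<lambda>x. u x + v x) (\<lambda>x. u x + v x) = inner_L2 u u + inner_L2 v v"
    using orth u v uv by (simp add: inner_L2_add_left inner_L2_add_right)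
  then show ?thesis
    unfolding inner_L2_self by (simp only: of_real_add[symmetric] of_real_eq_iff)
qed

lemma bessel_identity:
  assumes f: "bounded_measurable M f" and F: "finite F" "F \<subseteq> L"
  shows "(\<integral>x. (norm (f x))\<^sup>2 \<partial>M)
    = (\<integral>x. (norm (f x - fourier_partial_sum f F x))\<^sup>2 \<partial>M) + (\<Sum>l\<in>F. (norm (inner_L2 f (e l)))\<^sup>2) / vol"
proof -
  let ?S = "fourier_partial_sum f F"
  have S: "bounded_measurable M ?S"
    by (rule bounded_measurable_fourier_partial_sum)
  have residual: "bounded_measurable M (\<lambda>x. f x - ?S x)"
    using f S by (rule bounded_measurable_diff)
  have "inner_L2 (\<lambda>x. f x - ?S x) ?S = 0"
    unfolding inner_L2_fourier_partial_sum_right[OF residual] using inner_L2_residual_e[OF f F] by simp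
  from pythagoras[OF residual S this] show ?thesis
    by (simp add: integral_norm_fourier_partial_sum_squared[OF F])
qed

lemma bessel_inequality:
  assumes "bounded_measurable M f" "finite F" "F \<subseteq> L"
  shows "(\<Sum>l\<in>F. (norm (inner_L2 f (e l)))\<^sup>2) \<le> vol * (\<integral>x. (norm (f x))\<^sup>2 \<partial>M)"
proof -
  have "0 \<le> (\<integral>x. (norm (f x - fourier_partial_sum f F x))\<^sup>2 \<partial>M)"
    by (rule integral_nonneg_AE) simp
  then show ?thesis
    using bessel_identity[OF assms] volume_pos by (simp add: field_simps)
qed

lemma integral_norm_residual_le:
  assumes "bounded_measurable M f" "finite F" "F \<subseteq> L"
  shows "(\<integral>x. (norm (f x - fourier_partial_sum f F x))\<^sup>2 \<partial>M) \<le> (\<integral>x. (norm (f x))\<^sup>2 \<partial>M)"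
  using bessel_identity[OF assms] volume_pos by (simp add: sum_nonneg)

lemma summable_on_norm_coeff_squared:
  assumes "bounded_measurable M f"
  shows "(\<lambda>l. (norm (inner_L2 f (e l)))\<^sup>2) summable_on L"
  using bessel_inequality[OF assms]
  by (intro nonneg_bdd_above_summable_on bdd_aboveI2[where M = "vol * (\<integral>x. (norm (f x))\<^sup>2 \<partial>M)"]) auto

lemma summable_on_coeff_products:
  assumes "bounded_measurable M f" "bounded_measurable M h"
  shows "(\<lambda>l. inner_L2 f (e l) * cnj (inner_L2 h (e l))) summable_on L"
proof -
  have "(\<lambda>l. ((norm (inner_L2 f (e l)))\<^sup>2 + (norm (inner_L2 h (e l)))\<^sup>2) / 2) summable_on L"
    using summable_on_cmult_right[OF summable_on_add[OF summable_on_norm_coeff_squared[OF assms(1)]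
          summable_on_norm_coeff_squared[OF assms(2)]], of "1/2"]
    by simp
  then have "(\<lambda>l. norm (inner_L2 f (e l) * cnj (inner_L2 h (e l)))) summable_on L"
  proof (rule Infinite_Sum.abs_summable_on_comparison_test')
    fix l
    have "0 \<le> (norm (inner_L2 f (e l)) - norm (inner_L2 h (e l)))\<^sup>2"
      by simp
    then show "norm (inner_L2 f (e l) * cnj (inner_L2 h (e l)))
        \<le> ((norm (inner_L2 f (e l)))\<^sup>2 + (norm (inner_L2 h (e l)))\<^sup>2) / 2"
      by (simp add: norm_mult power2_eq_square algebra_simps)
  qed
  then show ?thesis
    by (rule abs_summable_summable)
qed

lemma integral_norm_fourier_partial_sum_diff_squared:
  assumes "finite G'" "G \<subseteq> G'" "G' \<subseteq> L"
  shows "(\<integral>x. (norm (fourier_partial_sum f G' x - fourier_partial_sum f G x))\<^sup>2 \<partial>M)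
    = (\<Sum>l\<in>G' - G. (norm (inner_L2 f (e l)))\<^sup>2) / vol"
proof -
  have "fourier_partial_sum f G' x - fourier_partial_sum f G x = fourier_partial_sum f (G' - G) x" for x
    unfolding fourier_partial_sum_def using assms by (simp add: sum_diff finite_subset)
  moreover have "finite (G' - G)" "G' - G \<subseteq> L"
    using assms by auto
  ultimately show ?thesis
    by (simp add: integral_norm_fourier_partial_sum_squared)
qed

lemma fourier_partial_sums_converge_L1:
  assumes f: "bounded_measurable M f"
  obtains F g where "\<And>k. finite (F k)" "\<And>k. F k \<subseteq> L" "filterlim F (finite_subsets_at_top L) sequentially"
    "g \<in> borel_measurable M" "AE x in M. (\<lambda>k. fourier_partial_sum f (F k) x) \<longlonglongrightarrow> g x"
    "\<And>k. integrable M (\<lambda>x. g x - fourier_partial_sum f (F k) x)"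
    "(\<lambda>k. \<integral>x. norm (g x - fourier_partial_sum f (F k) x) \<partial>M) \<longlonglongrightarrow> 0"
proof -
  define p where "p l = (1 / vol) * (norm (inner_L2 f (e l)))\<^sup>2" for l
  have "p summable_on L"
    unfolding p_def by (intro summable_on_cmult_right summable_on_norm_coeff_squared f)
  then have "(p has_sum infsum p L) L"
    by (simp add: summable_iff_has_sum_infsum)
  \<comment> \<open>Tails below \<open>4\<^sup>-\<^sup>k\<close> make consecutive partial sums \<open>4\<^sup>-\<^sup>k\<close>-close in \<open>L\<^sup>2\<close>, hence
    \<open>2\<^sup>-\<^sup>k\<close>-close in \<open>L\<^sup>1\<close> up to a constant.\<close>
  from finite_subsets_exhausting_with_small_tails[OF countable_L this, of "\<lambda>k. (1/4)^k"]
  obtain F where F: "\<And>k. finite (F k)" "\<And>k. F k \<subseteq> L" "\<And>k. F k \<subseteq> F (Suc k)"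
    "filterlim F (finite_subsets_at_top L) sequentially" and tail: "\<And>k. \<bar>infsum p L - sum p (F k)\<bar> < (1/4)^k"
    by auto
  define S where "S k = fourier_partial_sum f (F k)" for k
  have S: "bounded_measurable M (S k)" for k
    unfolding S_def by (rule bounded_measurable_fourier_partial_sum)
  have step_L2: "(\<integral>x. (norm (S (Suc k) x - S k x))\<^sup>2 \<partial>M) \<le> (1/4)^k" for k
  proof -
    have "(\<integral>x. (norm (S (Suc k) x - S k x))\<^sup>2 \<partial>M) = sum p (F (Suc k)) - sum p (F k)"
      unfolding S_def integral_norm_fourier_partial_sum_diff_squared[OF F(1,3,2)]
      using F(1) F(3) by (simp add: p_def sum_diff sum_divide_distrib diff_divide_distrib)
    also have "\<dots> \<le> infsum p L - sum p (F k)"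
      using finite_sum_le_infsum[OF \<open>p summable_on L\<close> F(1,2)] by (simp add: p_def volume_pos)
    finally show ?thesis
      using tail[of k] by linarith
  qed
  have step_L1: "(\<integral>x. norm (S (Suc k) x - S k x) \<partial>M) \<le> (1 + vol) / 2 * (1/2)^k" for k
    by (rule integral_norm_le_geometric_of_square_le[OF bounded_measurable_diff[OF S S] step_L2])
  obtain g where "g \<in> borel_measurable M" "AE x in M. (\<lambda>k. S k x) \<longlonglongrightarrow> g x"
    "\<And>k. integrable M (\<lambda>x. g x - S k x)" "(\<lambda>k. \<integral>x. norm (g x - S k x) \<partial>M) \<longlonglongrightarrow> 0"
    using L1_fast_Cauchy_sequence_converges[OF integrable_bounded_measurable[OF S] step_L1] by blast
  then show ?thesis
    using that[OF F(1,2,4)] unfolding S_def by blast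
qed

lemma tendsto_inner_L2_L1_limit:
  assumes S: "\<And>k. bounded_measurable M (S k)" and g: "integrable M g"
    and lim: "(\<lambda>k. \<integral>x. norm (g x - S k x) \<partial>M) \<longlonglongrightarrow> 0" and h: "bounded_measurable M h"
  shows "(\<lambda>k. inner_L2 (S k) h) \<longlonglongrightarrow> inner_L2 g h"
proof -
  have "integrable M (\<lambda>x. g x * cnj (h x))"
    using g bounded_measurable_cnj[OF h] by (rule integrable_mult_bounded_measurable)
  then have eq: "inner_L2 g h - inner_L2 (S k) h = (\<integral>x. (g x - S k x) * cnj (h x) \<partial>M)" for k
    unfolding inner_L2_def left_diff_distrib
    by (rule Bochner_Integration.integral_diff[symmetric]) (rule integrable_inner_L2[OF S h])
  have "(\<lambda>k. \<integral>x. (g x - S k x) * cnj (h x) \<partial>M) \<longlonglongrightarrow> 0"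
    by (rule tendsto_integral_mult_bounded_measurable[OF _ lim bounded_measurable_cnj[OF h]])
      (intro Bochner_Integration.integrable_diff g integrable_bounded_measurable S)
  then have "(\<lambda>k. inner_L2 g h - (inner_L2 g h - inner_L2 (S k) h)) \<longlonglongrightarrow> inner_L2 g h - 0"
    unfolding eq by (intro tendsto_diff tendsto_const)
  then show ?thesis
    by simp
qed

lemma AE_eq_if_same_coefficients:
  assumes diff: "integrable M (\<lambda>x. (norm (f x - g x))\<^sup>2)"
    and f: "bounded_measurable M f" and g: "g \<in> borel_measurable M" "integrable M g"
    and same: "\<And>l. l \<in> L \<Longrightarrow> inner_L2 g (e l) = inner_L2 f (e l)"
  shows "AE x in M. f x = g x"
proof -
  have "AE x in M. f x - g x = 0"
  proof (rule e_complete[OF _ diff])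
    show "\<forall>l\<in>L. (\<integral>x. (f x - g x) * cnj (e l x) \<partial>M) = 0"
    proof
      fix l assume "l \<in> L"
      have "(\<integral>x. (f x - g x) * cnj (e l x) \<partial>M) = inner_L2 f (e l) - inner_L2 g (e l)"
        unfolding inner_L2_def left_diff_distrib
        by (intro Bochner_Integration.integral_diff integrable_inner_L2[OF f bounded_measurable_e]
            integrable_mult_bounded_measurable[OF g(2) bounded_measurable_cnj[OF bounded_measurable_e]])
      then show "(\<integral>x. (f x - g x) * cnj (e l x) \<partial>M) = 0"
        using same[OF \<open>l \<in> L\<close>] by simp
    qed
  qed (use f g in measurable)
  then show ?thesis
    by simp
qed

lemma fourier_partial_sums_converge_weakly:
  assumes f: "bounded_measurable M f"
  obtains F where "\<And>k. finite (F k)" "\<And>k. F k \<subseteq> L" "filterlim F (finite_subsets_at_top L) sequentially"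
    "\<And>h. bounded_measurable M h \<Longrightarrow> (\<lambda>k. inner_L2 (fourier_partial_sum f (F k)) h) \<longlonglongrightarrow> inner_L2 f h"
proof -
  obtain F g where F: "\<And>k. finite (F k)" "\<And>k. F k \<subseteq> L" "filterlim F (finite_subsets_at_top L) sequentially"
    and g: "g \<in> borel_measurable M" "AE x in M. (\<lambda>k. fourier_partial_sum f (F k) x) \<longlonglongrightarrow> g x"
      "\<And>k. integrable M (\<lambda>x. g x - fourier_partial_sum f (F k) x)"
      "(\<lambda>k. \<integral>x. norm (g x - fourier_partial_sum f (F k) x) \<partial>M) \<longlonglongrightarrow> 0"
    using fourier_partial_sums_converge_L1[OF f] by blast
  let ?S = "\<lambda>k. fourier_partial_sum f (F k)"
  have S: "bounded_measurable M (?S k)" for k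
    by (rule bounded_measurable_fourier_partial_sum)
  have [measurable]: "f \<in> borel_measurable M" "?S k \<in> borel_measurable M" for k
    using f S by (auto intro: bounded_measurable_borel_measurable)
  have g_int: "integrable M g"
    using Bochner_Integration.integrable_add[OF g(3)[of 0] integrable_bounded_measurable[OF S[of 0]]] by simp
  note inner_g = tendsto_inner_L2_L1_limit[OF S g_int g(4)]
  have same_coeffs: "inner_L2 g (e l) = inner_L2 f (e l)" if l: "l \<in> L" for l
  proof -
    have "eventually (\<lambda>k. finite (F k) \<and> {l} \<subseteq> F k \<and> F k \<subseteq> L) sequentially"
      using F(3) l unfolding filterlim_finite_subsets_at_top by (metis empty_subsetI finite.simps insert_subset)
    then have "eventually (\<lambda>k. inner_L2 (?S k) (e l) = inner_L2 f (e l)) sequentially"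
      by eventually_elim (simp add: inner_L2_fourier_partial_sum_e l)
    then have "(\<lambda>k. inner_L2 (?S k) (e l)) \<longlonglongrightarrow> inner_L2 f (e l)"
      by (rule tendsto_eventually)
    with inner_g[OF bounded_measurable_e] show ?thesis
      using LIMSEQ_unique by blast
  qed
  have "integrable M (\<lambda>x. (norm (f x - g x))\<^sup>2)"
  proof (rule square_integrable_limit_Fatou[OF _ g(1) _ g(2)])
    show "(\<integral>\<^sup>+x. ennreal ((norm (f x - ?S k x))\<^sup>2) \<partial>M) \<le> ennreal (\<integral>x. (norm (f x))\<^sup>2 \<partial>M)" for k
      using integral_norm_residual_le[OF f F(1,2)] square_integrable_bounded_measurable[OF bounded_measurable_diff[OF f S]]
      by (subst nn_integral_eq_integral) (auto intro: ennreal_leI)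
  qed measurable
  then have "AE x in M. f x = g x"
    using f g(1) g_int same_coeffs by (rule AE_eq_if_same_coefficients)
  then have "inner_L2 f h = inner_L2 g h" if "bounded_measurable M h" for h
    unfolding inner_L2_def using that g(1)
    by (intro integral_cong_AE) (auto elim: AE_mp)
  then show ?thesis
    using that[OF F] inner_g by metis
qed

theorem parseval:
  assumes f: "bounded_measurable M f" and h: "bounded_measurable M h"
  shows "((\<lambda>l. inner_L2 f (e l) * cnj (inner_L2 h (e l))) has_sum (vol * inner_L2 f h)) L"
proof -
  let ?a = "\<lambda>l. inner_L2 f (e l) * cnj (inner_L2 h (e l))"
  obtain F where F: "filterlim F (finite_subsets_at_top L) sequentially"
    and weak: "(\<lambda>k. inner_L2 (fourier_partial_sum f (F k)) h) \<longlonglongrightarrow> inner_L2 f h"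
    using fourier_partial_sums_converge_weakly[OF f] h by metis
  have partial: "inner_L2 (fourier_partial_sum f (F k)) h = sum ?a (F k) / vol" for k
    unfolding fourier_partial_sum_def[abs_def] inner_L2_combination_left[OF h]
    by (simp add: inner_L2_commute[of "e _" h] sum_divide_distrib)
  have "(\<lambda>k. sum ?a (F k)) \<longlonglongrightarrow> infsum ?a L"
    using summable_on_coeff_products[OF f h] F
    by (auto simp: summable_iff_has_sum_infsum has_sum_def intro: filterlim_compose)
  then have "(\<lambda>k. sum ?a (F k) / vol) \<longlonglongrightarrow> infsum ?a L / vol"
    by (rule tendsto_divide[OF _ tendsto_const]) (use volume_pos in simp)
  then have "(\<lambda>k. inner_L2 (fourier_partial_sum f (F k)) h) \<longlonglongrightarrow> infsum ?a L / vol"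
    unfolding partial .
  with weak have "infsum ?a L = vol * inner_L2 f h"
    using LIMSEQ_unique volume_pos by (fastforce simp: field_simps)
  then show ?thesis
    using summable_on_coeff_products[OF f h] by (metis summable_iff_has_sum_infsum)
qed

end

section \<open>Fourier transforms of indicator functions\<close>

lemma borel_measurable_expo [measurable]: "expo l \<in> borel_measurable borel"
  unfolding expo_def cis_conv_exp by (intro borel_measurable_continuous_onI continuous_intros)

lemma norm_expo [simp]: "norm (expo l x) = 1"
  by (simp add: expo_def)

lemma expo_zero [simp]: "expo 0 x = 1"
  by (simp add: expo_def)

lemma expo_add: "expo l (s + x) = expo l s * expo l x"
  by (simp add: expo_def inner_add_right distrib_left cis_mult)

lemma cnj_expo_mult_expo [simp]: "cnj (expo l x) * expo l x = 1"
  by (simp add: expo_def cis_cnj cis_mult)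

lemma expo_mult_cnj: "expo a x * cnj (expo l x) = cnj (expo (l - a) x)"
  by (simp add: expo_def cis_cnj cis_mult inner_diff_left algebra_simps)

lemma sets_borel_translation:
  fixes X :: "'a::euclidean_space set"
  assumes "X \<in> sets borel"
  shows "(+) s ` X \<in> sets borel"
proof -
  have "(+) s ` X = (\<lambda>x. x - s) -` X \<inter> space borel"
    by (auto intro: image_eqI[where x = "x - s" for x])
  also have "\<dots> \<in> sets borel"
    using assms by measurable
  finally show ?thesis .
qed

definition fourier_indicator :: "'a::euclidean_space set \<Rightarrow> 'a \<Rightarrow> complex" where
  "fourier_indicator X \<xi> = (\<integral>x. indicator X x * cnj (expo \<xi> x) \<partial>lborel)"

lemma fourier_indicator_empty [simp]: "fourier_indicator {} \<xi> = 0"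
  by (simp add: fourier_indicator_def)

lemma integrable_indicator_expo:
  assumes "X \<in> sets borel" "emeasure lborel X < \<infinity>"
  shows "integrable lborel (\<lambda>x. indicator X x * cnj (expo \<xi> x))"
proof (rule Bochner_Integration.integrable_bound)
  show "integrable lborel (indicator X :: 'a \<Rightarrow> real)"
    using assms by (intro integrable_real_indicator) auto
  show "AE x in lborel. norm (indicator X x * cnj (expo \<xi> x)) \<le> norm (indicator X x :: real)"
    by (intro AE_I2) (simp add: indicator_def norm_mult)
qed (use assms in measurable)

lemma fourier_indicator_split:
  assumes "X \<in> sets borel" "Y \<in> sets borel" "emeasure lborel X < \<infinity>"
  shows "fourier_indicator X \<xi> = fourier_indicator (X \<inter> Y) \<xi> + fourier_indicator (X - Y) \<xi>"
proof -
  have "emeasure lborel (X \<inter> Y) < \<infinity>" "emeasure lborel (X - Y) < \<infinity>"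
    using assms by (auto intro: le_less_trans[OF emeasure_mono])
  then have "fourier_indicator (X \<inter> Y) \<xi> + fourier_indicator (X - Y) \<xi>
      = (\<integral>x. indicator (X \<inter> Y) x * cnj (expo \<xi> x) + indicator (X - Y) x * cnj (expo \<xi> x) \<partial>lborel)"
    unfolding fourier_indicator_def using assms
    by (intro Bochner_Integration.integral_add[symmetric] integrable_indicator_expo) auto
  also have "\<dots> = fourier_indicator X \<xi>"
    unfolding fourier_indicator_def by (intro Bochner_Integration.integral_cong) (auto simp: indicator_def)
  finally show ?thesis ..
qed

lemma fourier_indicator_translation:
  assumes [measurable]: "X \<in> sets borel"
  shows "fourier_indicator ((+) s ` X) \<xi> = cnj (expo \<xi> s) * fourier_indicator X \<xi>"
proof -
  have [measurable]: "(+) s ` X \<in> sets borel"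
    by (rule sets_borel_translation) simp
  have "fourier_indicator ((+) s ` X) \<xi>
      = (\<integral>x. indicator ((+) s ` X) x * cnj (expo \<xi> x) \<partial>distr lborel borel ((+) s))"
    unfolding fourier_indicator_def lborel_distr_plus ..
  also have "\<dots> = (\<integral>x. indicator ((+) s ` X) (s + x) * cnj (expo \<xi> (s + x)) \<partial>lborel)"
    by (rule integral_distr) (auto simp: measurable_lborel1)
  also have "\<dots> = (\<integral>x. cnj (expo \<xi> s) * (indicator X x * cnj (expo \<xi> x)) \<partial>lborel)"
    by (intro Bochner_Integration.integral_cong) (auto simp: indicator_def expo_add image_iff)
  also have "\<dots> = cnj (expo \<xi> s) * fourier_indicator X \<xi>"
    unfolding fourier_indicator_def by (rule integral_mult_right_zero)
  finally show ?thesis .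
qed

lemma fourier_indicator_zero:
  assumes "X \<in> sets borel" "emeasure lborel X < \<infinity>"
  shows "fourier_indicator X 0 = measure lebesgue X"
proof -
  have "fourier_indicator X 0 = (\<integral>x. of_real (indicator X x) \<partial>lborel)"
    unfolding fourier_indicator_def by (intro Bochner_Integration.integral_cong) (auto simp: indicator_def)
  also have "\<dots> = of_real (measure lborel X)"
    using assms by (simp add: integral_complex_of_real[symmetric])
  finally show ?thesis
    using assms by simp
qed

section \<open>The boundary of a spectral domain\<close>

lemma frontier_covered_by_translates:
  fixes \<Omega> :: "'a::euclidean_space set"
  assumes "bounded \<Omega>" "open \<Omega>" "d > 0"
  obtains S where "finite S" "S \<subseteq> ball 0 d" "frontier \<Omega> \<subseteq> (\<Union>s\<in>S. (+) s ` \<Omega>)"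
proof -
  have cover: "frontier \<Omega> \<subseteq> (\<Union>s\<in>ball 0 d. (+) s ` \<Omega>)"
  proof
    fix z assume "z \<in> frontier \<Omega>"
    then have "z \<in> closure \<Omega>"
      by (simp add: frontier_def)
    then obtain y where "y \<in> \<Omega>" "dist y z < d"
      using assms(3) closure_approachable by blast
    then have "z - y \<in> ball 0 d" "z = (z - y) + y"
      by (auto simp: dist_norm norm_minus_commute)
    then show "z \<in> (\<Union>s\<in>ball 0 d. (+) s ` \<Omega>)"
      using \<open>y \<in> \<Omega>\<close> by blast
  qed
  obtain S where "S \<subseteq> ball 0 d" "finite S" "frontier \<Omega> \<subseteq> (\<Union>s\<in>S. (+) s ` \<Omega>)"
    by (rule compactE_image[OF compact_frontier_bounded[OF assms(1)] open_translation[OF assms(2)] cover])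
  then show ?thesis
    using that by blast
qed

locale spectral_domain =
  fixes \<Omega> :: "'a::euclidean_space set" and \<Lambda> :: "'a set"
  assumes bounded_domain: "bounded \<Omega>" and open_domain: "open \<Omega>" and nonempty_domain: "\<Omega> \<noteq> {}"
    and countable_spectrum: "countable \<Lambda>" and basis: "orthogonal_basis_exps \<Omega> \<Lambda>"
begin

lemma domain_borel [measurable]: "\<Omega> \<in> sets borel"
  using open_domain by (rule borel_open)

lemma domain_lmeasurable: "\<Omega> \<in> lmeasurable"
  using bounded_domain open_domain by (rule lmeasurable_open)

lemma measure_lebesgue_on_domain: "measure (lebesgue_on \<Omega>) \<Omega> = measure lebesgue \<Omega>"
  using domain_lmeasurable by (intro measure_restrict_space) auto

lemma volume_domain_pos: "measure lebesgue \<Omega> > 0"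
proof -
  obtain x r where "r > 0" "ball x r \<subseteq> \<Omega>"
    using nonempty_domain open_domain by (meson ex_in_conv openE)
  then have "0 < measure lebesgue (ball x r)"
    using content_ball_pos by simp
  also have "\<dots> \<le> measure lebesgue \<Omega>"
    using \<open>ball x r \<subseteq> \<Omega>\<close> domain_lmeasurable by (intro measure_mono_fmeasurable) auto
  finally show ?thesis .
qed

sublocale L2: unimodular_orthogonal_basis "lebesgue_on \<Omega>" \<Lambda> expo
proof (rule unimodular_orthogonal_basis.intro[OF finite_measure_lebesgue_on[OF domain_lmeasurable]],
    unfold_locales)
  show "expo l \<in> borel_measurable (lebesgue_on \<Omega>)" for l
    by (intro measurable_restrict_space1 measurable_completion) (simp add: measurable_lborel1)
  show "(\<integral>x. expo l x * cnj (expo k x) \<partial>lebesgue_on \<Omega>) = 0" if "l \<in> \<Lambda>" "k \<in> \<Lambda>" "l \<noteq> k" for l k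
    using basis that unfolding orthogonal_basis_exps_def L2_inner_def by blast
  show "AE x in lebesgue_on \<Omega>. f x = 0"
    if "f \<in> borel_measurable (lebesgue_on \<Omega>)" "integrable (lebesgue_on \<Omega>) (\<lambda>x. (norm (f x))\<^sup>2)"
      "\<forall>l\<in>\<Lambda>. (\<integral>x. f x * cnj (expo l x) \<partial>lebesgue_on \<Omega>) = 0" for f
    using basis that unfolding orthogonal_basis_exps_def L2_inner_def square_integrable_on_def by blast
qed (use countable_spectrum volume_domain_pos measure_lebesgue_on_domain in auto)

lemma spectrum_nonempty: "\<Lambda> \<noteq> {}"
proof
  assume "\<Lambda> = {}"
  then have "AE x in lebesgue_on \<Omega>. (1::complex) = 0"
    using L2.e_complete[of "\<lambda>x. 1"] by simp
  then have "emeasure (lebesgue_on \<Omega>) \<Omega> = 0"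
    by (simp add: AE_iff_measurable[OF _ refl])
  then show False
    using L2.volume_pos by (simp add: measure_def)
qed

lemma bounded_measurable_indicator_expo:
  assumes [measurable]: "X \<in> sets borel"
  shows "bounded_measurable (lebesgue_on \<Omega>) (\<lambda>x. indicator X x * expo a x)"
proof (rule bounded_measurableI[where B = 1])
  show "(\<lambda>x. indicator X x * expo a x) \<in> borel_measurable (lebesgue_on \<Omega>)"
    by (intro measurable_restrict_space1 measurable_completion) (simp add: measurable_lborel1)
qed (simp add: indicator_def)

lemma inner_L2_indicator_expo:
  assumes [measurable]: "X \<in> sets borel" and "X \<subseteq> \<Omega>"
  shows "L2.inner_L2 (\<lambda>x. indicator X x * expo a x) (expo l) = fourier_indicator X (l - a)"
proof -
  have "L2.inner_L2 (\<lambda>x. indicator X x * expo a x) (expo l)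
      = (\<integral>x. indicator \<Omega> x *\<^sub>R (indicator X x * cnj (expo (l - a) x)) \<partial>lebesgue)"
    unfolding L2.inner_L2_def mult.assoc expo_mult_cnj
    using domain_lmeasurable by (intro integral_restrict_space) auto
  also have "\<dots> = (\<integral>x. indicator X x * cnj (expo (l - a) x) \<partial>lebesgue)"
    using assms(2) by (intro Bochner_Integration.integral_cong) (auto simp: indicator_def)
  also have "\<dots> = fourier_indicator X (l - a)"
    unfolding fourier_indicator_def by (rule integral_completion) (simp add: measurable_lborel1)
  finally show ?thesis .
qed

lemma inner_L2_indicator_expos:
  assumes "X \<in> sets borel" "Y \<in> sets borel" "X \<subseteq> \<Omega>" "Y \<subseteq> \<Omega>"
  shows "L2.inner_L2 (\<lambda>x. indicator X x * expo a x) (\<lambda>x. indicator Y x * expo a x) = measure lebesgue (X \<inter> Y)"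
proof -
  have "L2.inner_L2 (\<lambda>x. indicator X x * expo a x) (\<lambda>x. indicator Y x * expo a x)
      = (\<integral>x. of_real (indicator (X \<inter> Y) x) \<partial>lebesgue_on \<Omega>)"
    unfolding L2.inner_L2_def
    by (intro Bochner_Integration.integral_cong) (auto simp: indicator_def expo_mult_cnj)
  also have "\<dots> = of_real (measure (lebesgue_on \<Omega>) (X \<inter> Y))"
    using assms by (simp add: integral_complex_of_real[symmetric] Int_absorb2 le_infI1)
  also have "measure (lebesgue_on \<Omega>) (X \<inter> Y) = measure lebesgue (X \<inter> Y)"
    using assms domain_lmeasurable by (intro measure_restrict_space) auto
  finally show ?thesis .
qed

lemma parseval_indicators:
  assumes X: "X \<in> sets borel" "X \<subseteq> (+) s ` \<Omega>" and Y: "Y \<in> sets borel" "Y \<subseteq> (+) s ` \<Omega>"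
  shows "((\<lambda>l. fourier_indicator X (l - a) * cnj (fourier_indicator Y (l - a)))
    has_sum (measure lebesgue \<Omega> * measure lebesgue (X \<inter> Y))) \<Lambda>"
proof -
  \<comment> \<open>Translating \<open>X\<close> and \<open>Y\<close> back into \<open>\<Omega>\<close> multiplies both transforms by the same unimodular factor.\<close>
  define X' Y' where "X' = (+) (- s) ` X" and "Y' = (+) (- s) ` Y"
  have "X' \<in> sets borel"
    unfolding X'_def by (rule sets_borel_translation[OF X(1)])
  moreover have "Y' \<in> sets borel"
    unfolding Y'_def by (rule sets_borel_translation[OF Y(1)])
  moreover have "X' \<subseteq> \<Omega>" "X = (+) s ` X'" "Y' \<subseteq> \<Omega>" "Y = (+) s ` Y'"
    unfolding X'_def Y'_def using X(2) Y(2) by (auto simp: image_image)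
  ultimately have X': "X' \<in> sets borel" "X' \<subseteq> \<Omega>" "X = (+) s ` X'"
    and Y': "Y' \<in> sets borel" "Y' \<subseteq> \<Omega>" "Y = (+) s ` Y'"
    by auto
  have "X' \<inter> Y' = (+) (- s) ` (X \<inter> Y)"
    unfolding X'_def Y'_def by auto
  then have same_measure: "measure lebesgue (X' \<inter> Y') = measure lebesgue (X \<inter> Y)"
    using measure_translation[of "- s" "X \<inter> Y"] by simp
  have "fourier_indicator X (l - a) * cnj (fourier_indicator Y (l - a))
      = fourier_indicator X' (l - a) * cnj (fourier_indicator Y' (l - a))" for l
    by (subst X'(3), subst Y'(3)) (simp add: fourier_indicator_translation X'(1) Y'(1))
  moreover have "((\<lambda>l. fourier_indicator X' (l - a) * cnj (fourier_indicator Y' (l - a)))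
      has_sum (measure lebesgue \<Omega> * measure lebesgue (X' \<inter> Y'))) \<Lambda>"
    using L2.parseval[OF bounded_measurable_indicator_expo[OF X'(1), of a] bounded_measurable_indicator_expo[OF Y'(1), of a]]
    by (simp add: inner_L2_indicator_expo inner_L2_indicator_expos X' Y' measure_lebesgue_on_domain)
  ultimately show ?thesis
    using same_measure by simp
qed

lemma fourier_indicator_domain:
  assumes "a \<in> \<Lambda>" "l \<in> \<Lambda>"
  shows "fourier_indicator \<Omega> (l - a) = (if l = a then measure lebesgue \<Omega> else 0)"
proof -
  have "fourier_indicator \<Omega> (l - a) = L2.inner_L2 (\<lambda>x. indicator \<Omega> x * expo a x) (expo l)"
    by (simp add: inner_L2_indicator_expo)
  also have "\<dots> = L2.inner_L2 (expo a) (expo l)"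
    unfolding L2.inner_L2_def by (intro Bochner_Integration.integral_cong) auto
  finally show ?thesis
    using assms by (simp add: L2.inner_L2_e_e measure_lebesgue_on_domain)
qed

lemma has_sum_zero_if_covered_by_translates:
  assumes "finite S" "\<And>s. s \<in> S \<Longrightarrow> A \<subseteq> (+) s ` \<Omega>" "A \<in> sets borel"
    and "X \<in> sets borel" "emeasure lborel X < \<infinity>" "A \<inter> X = {}" "X \<subseteq> (\<Union>s\<in>S. (+) s ` \<Omega>)"
  shows "((\<lambda>l. fourier_indicator A (l - a) * cnj (fourier_indicator X (l - a))) has_sum 0) \<Lambda>"
  using assms(1,2,4-)
proof (induction S arbitrary: X rule: finite_induct)
  case (insert s S)
  \<comment> \<open>\<open>X \<inter> T\<close> and \<open>A\<close> lie in the same translate \<open>T\<close> and are disjoint, so Parseval in \<open>T\<close> kills that part.\<close>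
  define T where "T = (+) s ` \<Omega>"
  have T: "T \<in> sets borel"
    unfolding T_def by (rule sets_borel_translation) simp
  have "A \<inter> (X \<inter> T) = {}"
    using insert.prems(4) by blast
  then have inside: "((\<lambda>l. fourier_indicator A (l - a) * cnj (fourier_indicator (X \<inter> T) (l - a))) has_sum 0) \<Lambda>"
    using parseval_indicators[OF assms(3) _ _ Int_lower2, of s "X \<inter> T" a] insert.prems T
    by (simp add: T_def)
  have outside: "((\<lambda>l. fourier_indicator A (l - a) * cnj (fourier_indicator (X - T) (l - a))) has_sum 0) \<Lambda>"
    using insert.prems T by (intro insert.IH) (auto simp: T_def intro: le_less_trans[OF emeasure_mono])
  show ?case
    using has_sum_add[OF inside outside]
    by (simp add: fourier_indicator_split[OF insert.prems(2) T insert.prems(3)] distrib_left)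
qed simp

lemma has_sum_zero_across_frontier:
  assumes A: "compact A" "A \<subseteq> \<Omega>" and E: "E \<in> sets borel" "E \<subseteq> frontier \<Omega>"
  shows "((\<lambda>l. fourier_indicator A (l - a) * cnj (fourier_indicator E (l - a))) has_sum 0) \<Lambda>"
proof -
  obtain d where "d > 0" and thickening: "(\<Union>x\<in>A. ball x d) \<subseteq> \<Omega>"
    using compact_subset_open_imp_ball_epsilon_subset[OF A(1) open_domain A(2)] .
  obtain S where S: "finite S" "S \<subseteq> ball 0 d" "frontier \<Omega> \<subseteq> (\<Union>s\<in>S. (+) s ` \<Omega>)"
    using frontier_covered_by_translates[OF bounded_domain open_domain \<open>d > 0\<close>] .
  have "A \<subseteq> (+) s ` \<Omega>" if "s \<in> S" for s
  proof
    fix x assume "x \<in> A"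
    moreover have "x - s \<in> ball x d"
      using S(2) that by (auto simp: dist_norm)
    ultimately have "x - s \<in> \<Omega>"
      using thickening by blast
    then show "x \<in> (+) s ` \<Omega>"
      by (rule rev_image_eqI) simp
  qed
  moreover have "emeasure lborel E < \<infinity>"
    using E(2) compact_frontier_bounded[OF bounded_domain]
    by (intro emeasure_bounded_finite) (auto intro: bounded_subset compact_imp_bounded)
  moreover have "A \<inter> E = {}"
    using A(2) E(2) open_domain by (auto simp: frontier_def interior_open)
  ultimately show ?thesis
    using A E S by (intro has_sum_zero_if_covered_by_translates) (auto intro: borel_compact)
qed

lemma frontier_inter_translate_borel: "frontier \<Omega> \<inter> (+) t ` \<Omega> \<in> sets borel"
  by (intro sets.Int borel_closed borel_open frontier_closed open_translation open_domain)

lemma frontier_inter_translate_bounded: "bounded (frontier \<Omega> \<inter> (+) t ` \<Omega>)"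
  using compact_imp_bounded[OF compact_frontier_bounded[OF bounded_domain]] by (rule bounded_subset) blast

lemma parseval_indicator:
  assumes "X \<in> sets borel" "X \<subseteq> (+) s ` \<Omega>"
  shows "((\<lambda>l. (norm (fourier_indicator X (l - a)))\<^sup>2) has_sum (measure lebesgue \<Omega> * measure lebesgue X)) \<Lambda>"
proof -
  have "((\<lambda>l. of_real ((norm (fourier_indicator X (l - a)))\<^sup>2) :: complex)
      has_sum of_real (measure lebesgue \<Omega> * measure lebesgue X)) \<Lambda>"
    using parseval_indicators[OF assms assms, of a] by (simp only: complex_norm_square of_real_mult Int_absorb)
  then show ?thesis
    by (simp only: has_sum_of_real_iff)
qed

lemma measure_frontier_inter_translate_le:
  assumes A: "compact A" "A \<subseteq> \<Omega>"
  shows "measure lebesgue (frontier \<Omega> \<inter> (+) t ` \<Omega>) \<le> measure lebesgue (\<Omega> - A)"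
proof -
  obtain a where a: "a \<in> \<Lambda>"
    using spectrum_nonempty by blast
  define E where "E = frontier \<Omega> \<inter> (+) t ` \<Omega>"
  let ?vol = "measure lebesgue \<Omega>" and ?F = "\<lambda>X l. fourier_indicator X (l - a)"
  have E: "E \<in> sets borel" "E \<subseteq> frontier \<Omega>" "E \<subseteq> (+) t ` \<Omega>" "emeasure lborel E < \<infinity>"
    unfolding E_def using frontier_inter_translate_borel emeasure_bounded_finite[OF frontier_inter_translate_bounded]
    by auto
  have A_borel: "A \<in> sets borel"
    using A(1) by (rule borel_compact)
  have whole: "((\<lambda>l. ?F \<Omega> l * cnj (?F E l)) has_sum (?vol * measure lebesgue E)) \<Lambda>"
  proof (rule has_sum_finite_neutralI[where B = "{a}"])
    show "?F \<Omega> l * cnj (?F E l) = 0" if "l \<in> \<Lambda> - {a}" for l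
      using that a by (simp add: fourier_indicator_domain)
    show "complex_of_real (?vol * measure lebesgue E) = (\<Sum>l\<in>{a}. ?F \<Omega> l * cnj (?F E l))"
      using fourier_indicator_domain[OF a a] E by (simp add: fourier_indicator_zero)
  qed (use a in auto)
  have inner_part: "((\<lambda>l. ?F A l * cnj (?F E l)) has_sum 0) \<Lambda>"
    using A E(1,2) by (rule has_sum_zero_across_frontier)
  have "?F \<Omega> l = ?F A l + ?F (\<Omega> - A) l" for l
    using fourier_indicator_split[OF domain_borel A_borel] emeasure_bounded_finite[OF bounded_domain] A(2)
    by (simp add: Int_absorb1)
  then have "((\<lambda>l. ?F (\<Omega> - A) l * cnj (?F E l)) has_sum (?vol * measure lebesgue E)) \<Lambda>"
    using has_sum_add[OF whole has_sum_uminusI[OF inner_part]] by (simp add: algebra_simps)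
  then have "norm (complex_of_real (?vol * measure lebesgue E))
      \<le> (?vol * measure lebesgue (\<Omega> - A) + ?vol * measure lebesgue E) / 2"
    using A_borel by (intro has_sum_norm_le_AM_GM[OF _ parseval_indicator[of "\<Omega> - A" 0] parseval_indicator[OF E(1,3)]]) auto
  moreover have "norm (complex_of_real (?vol * measure lebesgue E)) = ?vol * measure lebesgue E"
    by (simp only: norm_of_real abs_of_nonneg[OF mult_nonneg_nonneg[OF measure_nonneg measure_nonneg]])
  ultimately have "?vol * measure lebesgue E \<le> ?vol * measure lebesgue (\<Omega> - A)"
    by (simp add: field_simps)
  then show ?thesis
    using volume_domain_pos unfolding E_def by simp
qed

lemma measure_frontier_inter_translate_eq_0: "measure lebesgue (frontier \<Omega> \<inter> (+) t ` \<Omega>) = 0"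
proof -
  have "measure lebesgue (frontier \<Omega> \<inter> (+) t ` \<Omega>) \<le> \<epsilon>" if \<epsilon>: "\<epsilon> > 0" for \<epsilon>
  proof -
    obtain T where T: "closed T" "T \<subseteq> \<Omega>" "\<Omega> - T \<in> lmeasurable" "emeasure lebesgue (\<Omega> - T) < ennreal \<epsilon>"
      using sets_lebesgue_inner_closed[OF fmeasurableD[OF domain_lmeasurable] \<epsilon>] by blast
    have "compact T"
      using T(1,2) bounded_domain by (meson bounded_subset compact_eq_bounded_closed)
    have "measure lebesgue (\<Omega> - T) < \<epsilon>"
      using T(3,4) \<epsilon> by (simp add: emeasure_eq_measure2 ennreal_less_iff)
    then show ?thesis
      using measure_frontier_inter_translate_le[OF \<open>compact T\<close> T(2), of t] by linarith
  qed
  then show ?thesis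
    by (meson antisym dense_ge measure_nonneg)
qed

lemma frontier_null_sets: "frontier \<Omega> \<in> null_sets lebesgue"
proof -
  obtain S where S: "finite S" "frontier \<Omega> \<subseteq> (\<Union>s\<in>S. (+) s ` \<Omega>)"
    using frontier_covered_by_translates[OF bounded_domain open_domain zero_less_one] by metis
  have "frontier \<Omega> \<inter> (+) s ` \<Omega> \<in> null_sets lebesgue" for s
  proof -
    have "frontier \<Omega> \<inter> (+) s ` \<Omega> \<in> lmeasurable"
      using frontier_inter_translate_bounded frontier_inter_translate_borel
      by (intro bounded_set_imp_lmeasurable) simp_all
    then show ?thesis
      using measure_frontier_inter_translate_eq_0[of s] by (auto simp: emeasure_eq_measure2)
  qed
  then have "(\<Union>s\<in>S. frontier \<Omega> \<inter> (+) s ` \<Omega>) \<in> null_sets lebesgue"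
    using S(1) by blast
  moreover have "frontier \<Omega> = (\<Union>s\<in>S. frontier \<Omega> \<inter> (+) s ` \<Omega>)"
    using S(2) by blast
  ultimately show ?thesis
    by simp
qed

end

theorem theorem3p3:
  fixes \<Omega> :: "'a::euclidean_space set"
  assumes "bounded \<Omega>" and "open \<Omega>" and "\<Omega> \<noteq> {}"
    and "spectral \<Omega>"
  shows "frontier \<Omega> \<in> null_sets lebesgue"
proof -
  obtain \<Lambda> where "countable \<Lambda>" "orthogonal_basis_exps \<Omega> \<Lambda>"
    using assms(4) unfolding spectral_def by blast
  then interpret spectral_domain \<Omega> \<Lambda>
    using assms by unfold_locales
  show ?thesis
    by (rule frontier_null_sets)
qed

end
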